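(* Let $p$ be a positive multiple of $4$ and let $q \ge 8$ be a power of two. Let $k = pq/2$. Then there exists a perfect coloring of the $p \times q$ toroidal grid with the color set $\{0,1,\ldots,k-1\}$, i.e. a coloring in which every color appears exactly twice and, for every color $c$, the $8$ neighbors of $c$ (four neighbors at each of its two occurrences) are pairwise distinct colors.
   Context: Rows of the $p\times q$ grid are indexed $0,\ldots,p-1$ and columns $0,\ldots,q-1$. The grid is treated as toroidal: the north, south, west and east neighbors of position $(x,y)$ are the positions $(x-1 \bmod p, y)$, $(x+1 \bmod p, y)$, $(x, y-1 \bmod q)$, $(x, y+1 \bmod q)$. A coloring assigns a color to each grid position. If every color appears exactly $f$ times, then each color $c$ has $4f$ neighbors in total, namely the colors at the four neighboring positions of each of the $f$ positions colored $c$ (counted as a list of $4f$ entries). The coloring is called perfect if every color appears the same number $f$ of times and, for every color $c$, these $4f$ neighbor colors are pairwise distinct. *)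

theory Defs
  imports Main "HOL-Library.Product_Lexorder"
begin

definition grid :: "nat \<Rightarrow> nat \<Rightarrow> (nat \<times> nat) set" where
  "grid p q = {0..<p} \<times> {0..<q}"

definition torus_nbrs :: "nat \<Rightarrow> nat \<Rightarrow> nat \<times> nat \<Rightarrow> (nat \<times> nat) list" where
  "torus_nbrs p q v = (case v of (x, y) \<Rightarrow>
     [((x + p - 1) mod p, y), ((x + 1) mod p, y), (x, (y + q - 1) mod q), (x, (y + 1) mod q)])"

definition positions :: "nat \<Rightarrow> nat \<Rightarrow> (nat \<times> nat \<Rightarrow> 'c) \<Rightarrow> 'c \<Rightarrow> (nat \<times> nat) set" where
  "positions p q col c = {v \<in> grid p q. col v = c}"

definition nbr_colors :: "nat \<Rightarrow> nat \<Rightarrow> (nat \<times> nat \<Rightarrow> 'c) \<Rightarrow> 'c \<Rightarrow> 'c list" where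
  "nbr_colors p q col c =
     concat (map (\<lambda>v. map col (torus_nbrs p q v)) (sorted_list_of_set (positions p q col c)))"

definition perfect_coloring :: "nat \<Rightarrow> nat \<Rightarrow> 'c set \<Rightarrow> (nat \<times> nat \<Rightarrow> 'c) \<Rightarrow> bool" where
  "perfect_coloring p q C col \<longleftrightarrow>
     col ` grid p q \<subseteq> C \<and>
     (\<exists>f. \<forall>c\<in>C. card (positions p q col c) = f) \<and>
     (\<forall>c\<in>C. distinct (nbr_colors p q col c))"

end

theory Submission
  imports Defs
begin

text \<open>
  The proof is by tiling.  A single 4 x 8 perfect colouring with 16 colours (each used
  twice) is verified by direct computation.  A general lifting construction then turns any
  perfect colouring B of the a x b torus with K colours into a perfect colouring of the
  (a * P) x (b * Q) torus with K * P * Q colours: every a x b block receives a copy of B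
  whose colours are shifted by K times the number of the block.  A lifted colour lives in a
  single block and is a translate of a base colour class, and its neighbour colours reduce
  mod K to the neighbour colours of that base class, so uniform class sizes and
  distinctness of neighbour colours are inherited.  The theorem is the case a = 4, b = 8,
  K = 16 of the lifting construction; the hypothesis that q is a power of two is used only
  to obtain 8 | q.
\<close>

lemma sorted_list_of_set_strict_mono_image:
  fixes f :: "'a::linorder \<Rightarrow> 'b::linorder"
  assumes "strict_mono f" and "finite S"
  shows "sorted_list_of_set (f ` S) = map f (sorted_list_of_set S)"
proof -
  have "sorted_wrt (<) (map f (sorted_list_of_set S))"
    unfolding sorted_wrt_map
    by (rule sorted_wrt_mono_rel[OF _ strict_sorted_list_of_set]) (use assms(1) strict_monoD in blast)
  moreover have "length (map f (sorted_list_of_set S)) = card (f ` S)"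
    using assms by (simp add: card_image strict_mono_imp_inj_on)
  ultimately show ?thesis
    using assms(2) by (subst sorted_list_of_set_unique[symmetric]) auto
qed

lemma mod_add_pred_dvd:
  fixes n a p :: nat
  assumes "a dvd p" and "p > 0"
  shows "(n + p - 1) mod p mod a = (n + a - 1) mod a"
proof -
  obtain P where p: "p = a * P" using assms(1) by blast
  have "P \<ge> 1" "a \<ge> 1" using assms(2) p by (simp_all add: Suc_le_eq)
  then have "a \<le> a * P" by simp
  then have "n + p - 1 = (n + a - 1) + a * (P - 1)"
    using \<open>a \<ge> 1\<close> unfolding p by (simp add: right_diff_distrib')
  then show ?thesis using mod_mod_cancel[OF assms(1)] by simp
qed

lemma torus_nbrs_reduce:
  fixes a b p q i j x y :: nat
  assumes "a dvd p" "b dvd q" "p > 0" "q > 0" "x < a" "y < b"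
  shows "map (\<lambda>u. (fst u mod a, snd u mod b)) (torus_nbrs p q (a * i + x, b * j + y))
         = torus_nbrs a b (x, y)"
proof -
  have "a * i + x + a - 1 = (x + a - 1) + a * i" "b * j + y + b - 1 = (y + b - 1) + b * j"
    using assms(5,6) by simp_all
  then have "(a * i + x + p - 1) mod p mod a = (x + a - 1) mod a"
    and "(b * j + y + q - 1) mod q mod b = (y + b - 1) mod b"
    using mod_add_pred_dvd[OF assms(1,3), of "a * i + x"]
      mod_add_pred_dvd[OF assms(2,4), of "b * j + y"] by simp_all
  moreover have "(a * i + x + 1) mod p mod a = (x + 1) mod a"
    and "(b * j + y + 1) mod q mod b = (y + 1) mod b"
    using mod_mod_cancel[OF assms(1)] mod_mod_cancel[OF assms(2)] by (simp_all add: add.assoc)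
  ultimately show ?thesis
    using assms(5,6) by (simp add: torus_nbrs_def)
qed

lemma finite_positions: "finite (positions p q col c)"
  unfolding positions_def grid_def by (rule finite_subset[of _ "{0..<p} \<times> {0..<q}"]) auto

definition block_lift :: "nat \<Rightarrow> nat \<Rightarrow> nat \<Rightarrow> nat \<Rightarrow> (nat \<times> nat \<Rightarrow> nat) \<Rightarrow> nat \<times> nat \<Rightarrow> nat" where
  "block_lift a b K Q B v = B (fst v mod a, snd v mod b) + K * ((fst v div a) * Q + snd v div b)"

lemma block_lift_mod_div:
  assumes "B (x mod a, y mod b) < K"
  shows "block_lift a b K Q B (x, y) mod K = B (x mod a, y mod b)"
    and "block_lift a b K Q B (x, y) div K = (x div a) * Q + y div b"
  using assms by (simp_all add: block_lift_def)

lemma reduce_in_grid: "a > 0 \<Longrightarrow> b > 0 \<Longrightarrow> (x mod a, y mod b) \<in> grid a b"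
  by (simp add: grid_def)

lemma block_index_lt: "(i::nat) < P \<Longrightarrow> u < a \<Longrightarrow> a * i + u < a * P"
proof -
  assume "i < P" "u < a"
  then have "a * i + u < a * (i + 1)" by simp
  also have "\<dots> \<le> a * P" using \<open>i < P\<close> by (intro mult_le_mono2) simp
  finally show ?thesis .
qed

lemma mixed_radix_unique:
  fixes Q :: nat
  assumes "j1 < Q" "j2 < Q" "i1 * Q + j1 = i2 * Q + j2"
  shows "i1 = i2" and "j1 = j2"
proof -
  have "i1 = (i1 * Q + j1) div Q" "j1 = (i1 * Q + j1) mod Q" using assms(1) by simp_all
  moreover have "i2 = (i2 * Q + j2) div Q" "j2 = (i2 * Q + j2) mod Q" using assms(2) by simp_all
  ultimately show "i1 = i2" "j1 = j2" using assms(3) by metis+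
qed

lemma positions_block_lift:
  fixes a b K P Q c :: nat
  assumes "a > 0" "b > 0" and range: "B ` grid a b \<subseteq> {0..<K}" and c: "c < K * P * Q"
  defines "i \<equiv> c div K div Q" and "j \<equiv> c div K mod Q"
  shows "positions (a * P) (b * Q) (block_lift a b K Q B) c =
         (\<lambda>u. (a * i + fst u, b * j + snd u)) ` positions a b B (c mod K)"
proof -
  have B_lt: "B (x mod a, y mod b) < K" for x y
    using range reduce_in_grid[OF assms(1,2)] by (meson atLeastLessThan_iff image_subset_iff)
  have "Q > 0" using c by (cases "Q = 0") auto
  have "c < P * Q * K" using c by (simp add: mult_ac)
  then have "c div K < P * Q" by (rule less_mult_imp_div_less)
  then have "i < P" and "j < Q" and cij: "c div K = i * Q + j"
    using \<open>Q > 0\<close> by (simp_all add: i_def j_def div_less_iff_less_mult)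
  show ?thesis
  proof (rule set_eqI, rule iffI)
    fix v assume "v \<in> positions (a * P) (b * Q) (block_lift a b K Q B) c"
    then obtain x y where v: "v = (x, y)" "y < b * Q" "block_lift a b K Q B (x, y) = c"
      by (auto simp: positions_def grid_def)
    have "y div b < Q" using v(2) by (simp add: less_mult_imp_div_less mult.commute)
    moreover have "(x div a) * Q + y div b = i * Q + j"
      using block_lift_mod_div(2)[where B = B and Q = Q, OF B_lt[of x y]] v cij by simp
    ultimately have "x div a = i" "y div b = j"
      using mixed_radix_unique[OF _ \<open>j < Q\<close>] by blast+
    then have "v = (a * i + x mod a, b * j + y mod b)"
      using v(1) mult_div_mod_eq[of a x] mult_div_mod_eq[of b y] by simp
    moreover have "(x mod a, y mod b) \<in> positions a b B (c mod K)"
      using block_lift_mod_div(1)[where B = B and Q = Q, OF B_lt[of x y]] v reduce_in_grid[OF assms(1,2)]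
      by (simp add: positions_def)
    ultimately show "v \<in> (\<lambda>u. (a * i + fst u, b * j + snd u)) ` positions a b B (c mod K)"
      by force
  next
    fix v assume "v \<in> (\<lambda>u. (a * i + fst u, b * j + snd u)) ` positions a b B (c mod K)"
    then obtain x y where v: "v = (a * i + x, b * j + y)" "x < a" "y < b" "B (x, y) = c mod K"
      by (auto simp: positions_def grid_def)
    have "block_lift a b K Q B v = c mod K + K * (c div K)"
      using v cij by (simp add: block_lift_def)
    then show "v \<in> positions (a * P) (b * Q) (block_lift a b K Q B) c"
      using v block_index_lt[OF \<open>i < P\<close>] block_index_lt[OF \<open>j < Q\<close>]
      by (simp add: positions_def grid_def)
  qed
qed

lemma card_positions_block_lift:
  fixes a b K P Q c :: nat
  assumes "a > 0" "b > 0" and range: "B ` grid a b \<subseteq> {0..<K}" and c: "c < K * P * Q"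
  shows "card (positions (a * P) (b * Q) (block_lift a b K Q B) c) = card (positions a b B (c mod K))"
  unfolding positions_block_lift[OF assms] by (rule card_image) (simp add: inj_on_def prod_eq_iff)

lemma nbr_colors_block_lift:
  fixes a b K P Q c :: nat
  assumes "a > 0" "b > 0" "P > 0" and range: "B ` grid a b \<subseteq> {0..<K}" and c: "c < K * P * Q"
  shows "map (\<lambda>k. k mod K) (nbr_colors (a * P) (b * Q) (block_lift a b K Q B) c)
         = nbr_colors a b B (c mod K)"
proof -
  define i j where "i = c div K div Q" and "j = c div K mod Q"
  define S where "S = positions a b B (c mod K)"
  define shift :: "nat \<times> nat \<Rightarrow> nat \<times> nat" where "shift = (\<lambda>u. (a * i + fst u, b * j + snd u))"
  have "Q > 0" using c by (cases "Q = 0") auto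
  have B_lt: "B (x mod a, y mod b) < K" for x y
    using range reduce_in_grid[OF assms(1,2)] by (meson atLeastLessThan_iff image_subset_iff)
  have "strict_mono shift" by (auto simp: strict_mono_def shift_def less_prod_def)
  moreover have "positions (a * P) (b * Q) (block_lift a b K Q B) c = shift ` S"
    using positions_block_lift[OF assms(1,2) range c] by (simp add: S_def shift_def i_def j_def)
  ultimately have sorted: "sorted_list_of_set (positions (a * P) (b * Q) (block_lift a b K Q B) c)
                       = map shift (sorted_list_of_set S)"
    by (simp add: sorted_list_of_set_strict_mono_image finite_positions S_def)
  have reduced_nbrs: "map (\<lambda>k. k mod K) (map (block_lift a b K Q B) (torus_nbrs (a * P) (b * Q) (shift u)))
        = map B (torus_nbrs a b u)" if "u \<in> S" for u
  proof -
    have u: "fst u < a" "snd u < b" using that by (auto simp: S_def positions_def grid_def)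
    have "map (\<lambda>k. k mod K) (map (block_lift a b K Q B) (torus_nbrs (a * P) (b * Q) (shift u)))
        = map B (map (\<lambda>w. (fst w mod a, snd w mod b)) (torus_nbrs (a * P) (b * Q) (shift u)))"
      by (simp add: block_lift_def B_lt)
    also have "\<dots> = map B (torus_nbrs a b u)"
      using torus_nbrs_reduce[of a "a * P" b "b * Q" "fst u" "snd u" i j] assms(1-3) \<open>Q > 0\<close> u
      by (simp add: shift_def)
    finally show ?thesis .
  qed
  have "map (\<lambda>k. k mod K) (nbr_colors (a * P) (b * Q) (block_lift a b K Q B) c)
      = concat (map (\<lambda>u. map (\<lambda>k. k mod K) (map (block_lift a b K Q B)
                   (torus_nbrs (a * P) (b * Q) (shift u)))) (sorted_list_of_set S))"
    unfolding nbr_colors_def sorted by (simp add: map_concat comp_def)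
  also have "\<dots> = concat (map (\<lambda>u. map B (torus_nbrs a b u)) (sorted_list_of_set S))"
    using reduced_nbrs finite_positions[of a b B "c mod K"]
    by (intro arg_cong[where f = concat] map_cong) (simp_all add: S_def)
  finally show ?thesis unfolding nbr_colors_def S_def .
qed

lemma block_lift_range:
  fixes a b K P Q :: nat
  assumes "a > 0" "b > 0" and range: "B ` grid a b \<subseteq> {0..<K}"
  shows "block_lift a b K Q B ` grid (a * P) (b * Q) \<subseteq> {0..<K * P * Q}"
proof clarify
  fix x y assume "(x, y) \<in> grid (a * P) (b * Q)"
  then have "x div a < P" "y div b < Q"
    by (simp_all add: grid_def less_mult_imp_div_less mult.commute)
  define m where "m = (x div a) * Q + y div b"
  have "m < (x div a) * Q + Q" using \<open>y div b < Q\<close> by (simp add: m_def)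
  also have "\<dots> = (x div a + 1) * Q" by simp
  also have "\<dots> \<le> P * Q" using \<open>x div a < P\<close> by (intro mult_right_mono) simp_all
  finally have "m + 1 \<le> P * Q" by simp
  have "B (x mod a, y mod b) < K"
    using range reduce_in_grid[OF assms(1,2)] by (meson atLeastLessThan_iff image_subset_iff)
  then have "block_lift a b K Q B (x, y) < K * (m + 1)"
    by (simp add: block_lift_def m_def)
  also have "\<dots> \<le> K * (P * Q)" using \<open>m + 1 \<le> P * Q\<close> by (rule mult_le_mono2)
  finally show "block_lift a b K Q B (x, y) \<in> {0..<K * P * Q}" by (simp add: mult.assoc)
qed

lemma perfect_block_lift:
  fixes a b K P Q :: nat
  assumes "a > 0" "b > 0" "P > 0" and perfect: "perfect_coloring a b {0..<K} B"
  shows "perfect_coloring (a * P) (b * Q) {0..<K * P * Q} (block_lift a b K Q B)"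
proof -
  from perfect obtain f where range: "B ` grid a b \<subseteq> {0..<K}"
    and card: "\<forall>c\<in>{0..<K}. card (positions a b B c) = f"
    and distinct: "\<forall>c\<in>{0..<K}. distinct (nbr_colors a b B c)"
    unfolding perfect_coloring_def by blast
  have K: "c mod K < K" if "c < K * P * Q" for c
  proof -
    have "K \<noteq> 0" using that by (cases "K = 0") simp_all
    then show ?thesis by simp
  qed
  have "\<forall>c\<in>{0..<K * P * Q}. card (positions (a * P) (b * Q) (block_lift a b K Q B) c) = f"
    using card card_positions_block_lift[OF assms(1,2) range] K by simp
  moreover have "distinct (nbr_colors (a * P) (b * Q) (block_lift a b K Q B) c)"
    if "c < K * P * Q" for c
  proof -
    have "distinct (nbr_colors a b B (c mod K))" using distinct K[OF that] by simp
    then have "distinct (map (\<lambda>k. k mod K) (nbr_colors (a * P) (b * Q) (block_lift a b K Q B) c))"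
      using nbr_colors_block_lift[OF assms(1-3) range that] by simp
    then show ?thesis by (simp add: distinct_map)
  qed
  ultimately show ?thesis
    using block_lift_range[OF assms(1,2) range] unfolding perfect_coloring_def by auto
qed

definition tile :: "nat list list" where
  "tile = [[3, 5, 0, 13, 9, 14, 10, 6],
           [8, 6, 2, 14, 1, 5, 15, 4],
           [2, 11, 12, 7, 4, 10, 7, 9],
           [1, 8, 15, 11, 0, 3, 13, 12]]"

definition tile_coloring :: "nat \<times> nat \<Rightarrow> nat" where
  "tile_coloring v = tile ! fst v ! snd v"

text \<open>The 4 x 8 grid as an explicit list of its 32 cells, enabling evaluation by simp.\<close>

lemma grid_4_8: "grid 4 8 = set (List.product [0..<4] [0..<8])"
  by (auto simp: grid_def)

lemma tile_colors_twice_distinct: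
  "\<forall>c\<in>set [0..<16]. card (positions 4 8 tile_coloring c) = 2 \<and> distinct (nbr_colors 4 8 tile_coloring c)"
  unfolding positions_def nbr_colors_def grid_4_8 set_filter[symmetric] sorted_list_of_set_sort_remdups
  by (simp add: tile_coloring_def tile_def torus_nbrs_def upt_rec)

lemma tile_perfect: "perfect_coloring 4 8 {0..<16} tile_coloring"
proof -
  have "tile_coloring ` grid 4 8 \<subseteq> {0..<16}"
    unfolding grid_4_8 by (simp add: tile_coloring_def tile_def upt_rec)
  then show ?thesis
    using tile_colors_twice_distinct unfolding perfect_coloring_def by auto
qed

lemma eight_dvd_power_of_two:
  fixes q :: nat
  assumes "q \<ge> 8" and "q = 2 ^ m"
  shows "8 dvd q"
proof -
  have "m \<ge> 3"
  proof (rule ccontr)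
    assume "\<not> m \<ge> 3"
    then have "q \<le> 2 ^ 2" unfolding assms(2) by (intro power_increasing) simp_all
    then show False using assms(1) by simp
  qed
  then have "(2::nat) ^ 3 dvd 2 ^ m" by (rule le_imp_power_dvd)
  then show ?thesis using assms(2) by simp
qed

theorem lemma1:
  fixes p q :: nat
  assumes "p > 0" and "4 dvd p"
    and "q \<ge> 8" and "\<exists>m. q = 2 ^ m"
  shows "\<exists>col :: nat \<times> nat \<Rightarrow> nat.
           perfect_coloring p q {0..<p * q div 2} col \<and>
           (\<forall>c\<in>{0..<p * q div 2}. card (positions p q col c) = 2)"
proof -
  obtain P where p: "p = 4 * P" using assms(2) by blast
  obtain Q where q: "q = 8 * Q" using assms(3,4) eight_dvd_power_of_two by blast
  have "P > 0" using assms(1) p by simp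
  have colors: "p * q div 2 = 16 * P * Q" unfolding p q by simp
  let ?col = "block_lift 4 8 16 Q tile_coloring"
  have "perfect_coloring p q {0..<p * q div 2} ?col"
    unfolding colors unfolding p q by (rule perfect_block_lift[OF _ _ \<open>P > 0\<close> tile_perfect]) simp_all
  moreover have "card (positions p q ?col c) = 2" if "c < p * q div 2" for c
  proof -
    have "card (positions p q ?col c) = card (positions 4 8 tile_coloring (c mod 16))"
      using card_positions_block_lift[of 4 8 tile_coloring 16 c P Q] tile_perfect that
      unfolding colors unfolding p q perfect_coloring_def by simp
    also have "\<dots> = 2" using tile_colors_twice_distinct by simp
    finally show ?thesis .
  qed
  ultimately show ?thesis by auto
qed

end
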